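(* Let $C>1$, $\alpha\in(0,1/4)$, $\gamma>C(20\alpha)^{1/5}$ and $r>5/\gamma$. Suppose $H$ is sampled from a $Cr/n$-spread distribution on subgraphs of $K_{n,n}$. Then, with probability at least $1-n^{-14}$, every $V\subset V(K_{n,n})$ with $|V|<2\alpha n$ satisfies $|E(H[V])|\le \gamma r|V|$ (i.e. $H$ is $(\alpha,\gamma r/n)$-sparse).
   Context: A random subgraph $H$ of $K_{n,n}$ is $q$-spread if $\mathbb{P}(S\subset H)\le q^{|S|}$ for every $S\subset E(K_{n,n})$. $H[V]$ denotes the subgraph of $H$ induced by $V$. *)

theory Defs
  imports "HOL-Probability.Probability"
begin

text \<open>An edge is identified with the pair (i, j) meaning the edge {Inl i, Inr j}.\<close>

definition Knn_vertices :: "nat \<Rightarrow> (nat + nat) set" where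
  "Knn_vertices n = Inl ` {..<n} \<union> Inr ` {..<n}"

definition Knn_edges :: "nat \<Rightarrow> (nat \<times> nat) set" where
  "Knn_edges n = {..<n} \<times> {..<n}"

definition induced_edges :: "(nat \<times> nat) set \<Rightarrow> (nat + nat) set \<Rightarrow> (nat \<times> nat) set" where
  "induced_edges H V = {(i, j) \<in> H. Inl i \<in> V \<and> Inr j \<in> V}"

definition spread :: "real \<Rightarrow> nat \<Rightarrow> (nat \<times> nat) set pmf \<Rightarrow> bool" where
  "spread q n \<mu> \<longleftrightarrow> set_pmf \<mu> \<subseteq> Pow (Knn_edges n) \<and>
     (\<forall>S \<subseteq> Knn_edges n. measure_pmf.prob \<mu> {H. S \<subseteq> H} \<le> q ^ card S)"

definition sparse :: "nat \<Rightarrow> real \<Rightarrow> real \<Rightarrow> (nat \<times> nat) set \<Rightarrow> bool" where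
  "sparse n \<alpha> p H \<longleftrightarrow> (\<forall>V \<subseteq> Knn_vertices n. real (card V) < 2 * \<alpha> * real n \<longrightarrow>
      real (card (induced_edges H V)) \<le> p * real n * real (card V))"

end

theory Submission
  imports Defs
begin

text \<open>
  A union bound over vertex sets. If a set V of v vertices spans more than \<gamma>rv edges of H,
  then H contains one of the (m choose k) sets of k > \<gamma>rv \<ge> 5v edges among the m \<le> v^2/4
  edges of K_{n,n}[V]. By spreadness this has probability at most
  (m choose k) (Cr/n)^k \<le> (3Cv/(4\<gamma>n))^k \<le> (3Cv/(4\<gamma>n))^(5v), and the fifth power of the
  base is O((v/n)^4) because \<gamma>^5 > 20\<alpha>C^5 and v < 2\<alpha>n. This beats the
  (2n choose v) \<le> (6n/v)^v choices of V: each size v contributes at most n^(-14) 2^(-v-1).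
\<close>

lemma pow_self_le_three_pow_fact: "real k ^ k \<le> 3 ^ k * fact k"
proof -
  have summable: "summable (\<lambda>j. real k ^ j /\<^sub>R fact j)"
    using exp_converges[of "real k"] sums_summable by blast
  have "real k ^ k / fact k \<le> (\<Sum>j. real k ^ j /\<^sub>R fact j)"
    using sum_le_suminf[OF summable, of "{k}"] by (simp add: divide_inverse_commute)
  also have "\<dots> = exp 1 ^ k"
    using exp_converges[of "real k"] exp_of_nat_mult[of k 1] by (simp add: sums_iff)
  also have "\<dots> \<le> 3 ^ k"
    by (intro power_mono exp_le) auto
  finally show ?thesis
    by (simp add: divide_le_eq mult.commute)
qed

lemma binomial_le_three_mult_div_pow:
  assumes "k > 0"
  shows "real (m choose k) \<le> (3 * real m / real k) ^ k"
proof -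
  have choose_fact: "real (m choose k) * fact k \<le> real m ^ k"
    using binomial_fact_pow[of m k] by (metis of_nat_fact of_nat_le_iff of_nat_mult of_nat_power)
  have "real (m choose k) * real k ^ k \<le> real (m choose k) * (3 ^ k * fact k)"
    by (intro mult_left_mono pow_self_le_three_pow_fact) auto
  also have "\<dots> = 3 ^ k * (real (m choose k) * fact k)"
    by (simp only: ac_simps)
  also have "\<dots> \<le> 3 ^ k * real m ^ k"
    using choose_fact by (intro mult_left_mono) auto
  also have "\<dots> = (3 * real m) ^ k"
    by (simp only: power_mult_distrib)
  finally show ?thesis
    using assms unfolding power_divide by (subst pos_le_divide_eq) auto
qed

lemma binomial_mult_pow_le_of_le_quarter_square:
  fixes q t v :: real
  assumes "q \<ge> 0" "t > 0" "v \<ge> 0" "real k > t * v" "4 * real m \<le> v ^ 2"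
  shows "real (m choose k) * q ^ k \<le> (3 * v * q / (4 * t)) ^ k"
proof -
  have k: "k > 0"
    using assms by (metis gr0I mult_nonneg_nonneg not_less of_nat_0 order_less_imp_le)
  have "4 * real m * t \<le> v ^ 2 * t"
    using assms by (intro mult_right_mono) auto
  also have "\<dots> = v * (t * v)"
    by (simp add: power2_eq_square)
  also have "\<dots> \<le> v * real k"
    using assms by (intro mult_left_mono) auto
  finally have "4 * real m * t \<le> v * real k" .
  hence ratio: "3 * real m * q / real k \<le> 3 * v * q / (4 * t)"
    using assms k by (simp add: field_simps mult_left_mono)
  have "real (m choose k) * q ^ k \<le> (3 * real m / real k) ^ k * q ^ k"
    using assms by (intro mult_right_mono binomial_le_three_mult_div_pow k) auto
  also have "\<dots> = (3 * real m * q / real k) ^ k"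
    by (simp add: power_mult_distrib power_divide)
  also have "\<dots> \<le> (3 * v * q / (4 * t)) ^ k"
    using assms ratio by (intro power_mono) auto
  finally show ?thesis .
qed

lemma two_mult_pow14_le_fourteen_pow: "21 \<le> v \<Longrightarrow> 2 * real v ^ 14 \<le> 14 ^ v"
proof (induction v rule: dec_induct)
  case base
  show ?case by simp
next
  case (step v)
  have v: "real v \<ge> 21"
    using step by simp
  have "(real v + 1) ^ 14 = ((real v + 1) / real v) ^ 14 * real v ^ 14"
    using v by (simp add: power_divide)
  also have "\<dots> \<le> (22 / 21) ^ 14 * real v ^ 14"
    using v by (intro mult_right_mono power_mono) (auto simp: field_simps)
  also have "\<dots> \<le> 14 * real v ^ 14"
    by (intro mult_right_mono) (auto simp: power_divide)
  finally show ?case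
    using step by (simp add: add.commute)
qed

lemma sum_inverse_two_pow_Suc_le_one: "(\<Sum>v\<le>N. 1 / 2 ^ Suc v :: real) \<le> 1"
proof -
  have "(\<Sum>v\<le>N. (1 / 2) ^ Suc v :: real) \<le> (\<Sum>v. (1 / 2) ^ Suc v)"
    using power_half_series by (intro sum_le_suminf) (auto simp: sums_iff)
  thus ?thesis
    using power_half_series by (simp add: sums_iff power_one_over)
qed

lemma fifth_power_ratio_le:
  fixes C \<gamma> v :: real
  assumes "C > 0" "\<gamma> > 0" "n > 0" "v \<ge> 0" "10 * C ^ 5 * v \<le> \<gamma> ^ 5 * real n"
  shows "(3 * C * v / (4 * \<gamma> * real n)) ^ 5 \<le> 243 * v ^ 4 / (10240 * real n ^ 4)"
proof -
  have "(3 * C * v / (4 * \<gamma> * real n)) ^ 5 = 243 * C ^ 5 * v ^ 5 / (1024 * \<gamma> ^ 5 * real n ^ 5)"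
    by (simp add: power_divide power_mult_distrib)
  also have "\<dots> = 243 * v ^ 4 * (10 * C ^ 5 * v) / (10240 * \<gamma> ^ 5 * real n ^ 5)"
    by (simp add: eval_nat_numeral ac_simps)
  also have "\<dots> \<le> 243 * v ^ 4 * (\<gamma> ^ 5 * real n) / (10240 * \<gamma> ^ 5 * real n ^ 5)"
    using assms by (intro divide_right_mono mult_left_mono) auto
  also have "\<dots> = 243 * v ^ 4 / (10240 * real n ^ 4)"
    using assms by (simp add: eval_nat_numeral)
  finally show ?thesis .
qed

text \<open>Bounds the probability that a fixed set of v vertices spans more than \<gamma>rv edges.
  It vanishes below 21 vertices, where 5v edges do not fit into the at most v^2/4 edges
  of K_{n,n} spanned by the set.\<close>
definition dense_set_bound :: "nat \<Rightarrow> nat \<Rightarrow> real" where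
  "dense_set_bound n v = (if 21 \<le> v then (243 * real v ^ 4 / (10240 * real n ^ 4)) ^ v else 0)"

lemma dense_set_bound_nonneg: "dense_set_bound n v \<ge> 0"
  by (simp add: dense_set_bound_def)

lemma binomial_mult_pow_le_dense_set_bound:
  fixes C \<alpha> \<gamma> r :: real and n m k v :: nat
  assumes "C > 0" "\<gamma> > 0" "\<alpha> < 1/4" "20 * \<alpha> * C ^ 5 \<le> \<gamma> ^ 5" "5 \<le> \<gamma> * r" "n > 0"
    and v: "real v < 2 * \<alpha> * real n"
    and k: "real k > \<gamma> * r * real v"
    and m: "4 * m \<le> v ^ 2"
  shows "real (m choose k) * (C * r / real n) ^ k \<le> dense_set_bound n v"
proof (cases "k \<le> m")
  case False
  thus ?thesis
    by (simp add: binomial_eq_0 dense_set_bound_nonneg)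
next
  case True
  have r: "r > 0"
    using assms zero_less_mult_pos[of \<gamma> r] by linarith
  have "5 * real v \<le> \<gamma> * r * real v"
    using assms by (intro mult_right_mono) auto
  hence "5 * v < k"
    using k by linarith
  hence "20 * v < v * v"
    using True m unfolding power2_eq_square by linarith
  hence v21: "21 \<le> v"
    by simp
  define y where "y = 3 * C * real v / (4 * \<gamma> * real n)"
  have y0: "y \<ge> 0"
    using assms unfolding y_def by simp
  have "10 * C ^ 5 * real v \<le> 10 * C ^ 5 * (2 * \<alpha> * real n)"
    using assms by (intro mult_left_mono) auto
  also have "\<dots> = (20 * \<alpha> * C ^ 5) * real n"
    by (simp add: ac_simps)
  also have "\<dots> \<le> \<gamma> ^ 5 * real n"
    using assms by (intro mult_right_mono) auto
  finally have y5: "y ^ 5 \<le> 243 * real v ^ 4 / (10240 * real n ^ 4)"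
    unfolding y_def using assms by (intro fifth_power_ratio_le) auto
  have "2 * \<alpha> * real n \<le> 1 * real n"
    using assms by (intro mult_right_mono) auto
  hence "real v ^ 4 \<le> real n ^ 4"
    using v by (intro power_mono) auto
  hence "243 * real v ^ 4 / (10240 * real n ^ 4) \<le> 243 * real n ^ 4 / (10240 * real n ^ 4)"
    by (intro divide_right_mono mult_left_mono) auto
  with y5 have "y ^ 5 \<le> 243 * real n ^ 4 / (10240 * real n ^ 4)"
    by (rule order_trans)
  also have "\<dots> \<le> 1"
    using assms by simp
  finally have "y ^ 5 \<le> 1" .
  hence y1: "y \<le> 1"
    using y0 by (simp add: power_le_one_iff)
  have "real (m choose k) * (C * r / real n) ^ k \<le> y ^ k"
    using binomial_mult_pow_le_of_le_quarter_square[of "C * r / real n" "\<gamma> * r" "real v" k m] assms r k m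
    by (simp add: y_def field_simps flip: of_nat_power of_nat_mult)
  also have "\<dots> \<le> y ^ (5 * v)"
    using y0 y1 \<open>5 * v < k\<close> by (intro power_decreasing) auto
  also have "\<dots> = (y ^ 5) ^ v"
    by (simp add: power_mult)
  also have "\<dots> \<le> dense_set_bound n v"
    using y0 y5 v21 by (simp add: dense_set_bound_def power_mono)
  finally show ?thesis .
qed

lemma binomial_mult_dense_set_bound_le:
  assumes "n > 0" "2 * v \<le> n"
  shows "real (2 * n choose v) * dense_set_bound n v \<le> 1 / (real n ^ 14 * 2 ^ Suc v)"
proof (cases "21 \<le> v")
  case False
  thus ?thesis
    by (simp add: dense_set_bound_def)
next
  case True
  define w where "w = real v / real n"
  have w0: "0 \<le> w" and w1: "w \<le> 1 / 2"
    using assms unfolding w_def by (auto simp: divide_le_eq)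
  have "real (2 * n choose v) \<le> (3 * real (2 * n) / real v) ^ v"
    using True by (intro binomial_le_three_mult_div_pow) auto
  hence "real (2 * n choose v) * dense_set_bound n v
      \<le> (3 * real (2 * n) / real v) ^ v * (243 * real v ^ 4 / (10240 * real n ^ 4)) ^ v"
    using True by (simp add: dense_set_bound_def mult_right_mono)
  also have "\<dots> = (1458 / 10240 * w\<^sup>2 * w) ^ v"
  proof -
    have "3 * real (2 * n) / real v * (243 * real v ^ 4 / (10240 * real n ^ 4))
        = 1458 / 10240 * w\<^sup>2 * w"
      using True assms by (simp add: w_def field_simps eval_nat_numeral)
    thus ?thesis
      unfolding power_mult_distrib[symmetric] by (rule arg_cong)
  qed
  also have "\<dots> \<le> (w / 28) ^ v"
  proof (intro power_mono)
    have "w\<^sup>2 \<le> (1 / 2)\<^sup>2"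
      using w0 w1 by (intro power_mono) auto
    hence "1458 / 10240 * w\<^sup>2 \<le> 1 / 28"
      by (simp add: power2_eq_square)
    thus "1458 / 10240 * w\<^sup>2 * w \<le> w / 28"
      using w0 mult_right_mono[of "1458 / 10240 * w\<^sup>2" "1 / 28" w] by simp
  qed (use w0 in auto)
  also have "\<dots> = w ^ v / (2 ^ v * 14 ^ v)"
    by (simp add: power_divide flip: power_mult_distrib)
  also have "\<dots> \<le> w ^ 14 / (2 ^ v * 14 ^ v)"
    using True w0 w1 by (intro divide_right_mono power_decreasing) auto
  also have "\<dots> = (2 * real v ^ 14 / 14 ^ v) / (real n ^ 14 * 2 ^ Suc v)"
    using assms by (simp add: w_def power_divide)
  also have "\<dots> \<le> 1 / (real n ^ 14 * 2 ^ Suc v)"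
    using True two_mult_pow14_le_fourteen_pow assms by (intro divide_right_mono) auto
  finally show ?thesis .
qed

lemma finite_Knn_vertices: "finite (Knn_vertices n)"
  by (simp add: Knn_vertices_def)

lemma card_Knn_vertices: "card (Knn_vertices n) = 2 * n"
  unfolding Knn_vertices_def by (subst card_Un_disjoint) (auto simp: card_image)

lemma finite_Knn_edges: "finite (Knn_edges n)"
  by (simp add: Knn_edges_def)

lemma induced_edges_Knn_subset: "induced_edges (Knn_edges n) V \<subseteq> Knn_edges n"
  by (auto simp: induced_edges_def)

lemma induced_edges_of_subgraph:
  "H \<subseteq> Knn_edges n \<Longrightarrow> induced_edges H V = H \<inter> induced_edges (Knn_edges n) V"
  by (auto simp: induced_edges_def)

lemma four_mult_card_induced_edges_Knn_le:
  assumes "V \<subseteq> Knn_vertices n"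
  shows "4 * card (induced_edges (Knn_edges n) V) \<le> card V ^ 2"
proof -
  define A where "A = {i. i < n \<and> Inl i \<in> V}"
  define B where "B = {j. j < n \<and> Inr j \<in> V}"
  have edges: "induced_edges (Knn_edges n) V = A \<times> B"
    by (auto simp: induced_edges_def Knn_edges_def A_def B_def)
  have "card A + card B = card (Inl ` A \<union> Inr ` B :: (nat + nat) set)"
    by (subst card_Un_disjoint) (auto simp: A_def B_def card_image)
  also have "\<dots> \<le> card V"
    using assms finite_Knn_vertices by (intro card_mono) (auto simp: A_def B_def intro: finite_subset)
  finally have "card A + card B \<le> card V" .
  moreover have "4 * (card A * card B) \<le> (card A + card B) ^ 2"
  proof -
    have "2 * real (card A) * real (card B) \<le> real (card A) ^ 2 + real (card B) ^ 2"
      by (rule sum_squares_bound)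
    hence "real (4 * (card A * card B)) \<le> real ((card A + card B) ^ 2)"
      by (simp add: power2_eq_square algebra_simps)
    thus ?thesis
      by (simp only: of_nat_le_iff)
  qed
  ultimately show ?thesis
    unfolding edges card_cartesian_product by (meson le_trans power_mono zero_le)
qed

lemma spread_prob_card_inter_ge:
  assumes "spread q n \<mu>" "F \<subseteq> Knn_edges n"
  shows "measure_pmf.prob \<mu> {H. k \<le> card (H \<inter> F)} \<le> real (card F choose k) * q ^ k"
proof -
  have F: "finite F"
    using assms finite_Knn_edges finite_subset by blast
  define Ss where "Ss = {S. S \<subseteq> F \<and> card S = k}"
  have "{H. k \<le> card (H \<inter> F)} \<subseteq> (\<Union>S\<in>Ss. {H. S \<subseteq> H})"
  proof
    fix H assume "H \<in> {H. k \<le> card (H \<inter> F)}"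
    then obtain S where "S \<subseteq> H \<inter> F" "card S = k"
      by (auto elim: obtain_subset_with_card_n)
    thus "H \<in> (\<Union>S\<in>Ss. {H. S \<subseteq> H})"
      by (auto simp: Ss_def)
  qed
  hence "measure_pmf.prob \<mu> {H. k \<le> card (H \<inter> F)} \<le> measure_pmf.prob \<mu> (\<Union>S\<in>Ss. {H. S \<subseteq> H})"
    by (intro measure_pmf.finite_measure_mono) auto
  also have "\<dots> \<le> (\<Sum>S\<in>Ss. measure_pmf.prob \<mu> {H. S \<subseteq> H})"
    using F by (intro measure_pmf.finite_measure_subadditive_finite) (auto simp: Ss_def)
  also have "\<dots> \<le> (\<Sum>S\<in>Ss. q ^ k)"
    using assms by (intro sum_mono) (auto simp: Ss_def spread_def)
  also have "\<dots> = real (card F choose k) * q ^ k"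
    using n_subsets[OF F] by (simp add: Ss_def)
  finally show ?thesis .
qed

definition least_nat_gt :: "real \<Rightarrow> nat" where
  "least_nat_gt x = nat (\<lfloor>x\<rfloor> + 1)"

lemma less_iff_least_nat_gt_le: "x < real k \<longleftrightarrow> least_nat_gt x \<le> k"
  unfolding least_nat_gt_def nat_le_iff by linarith

lemma least_nat_gt_gt: "x < real (least_nat_gt x)"
  using less_iff_least_nat_gt_le by blast

definition small_vertex_sets :: "nat \<Rightarrow> real \<Rightarrow> (nat + nat) set set" where
  "small_vertex_sets n \<alpha> = {V. V \<subseteq> Knn_vertices n \<and> real (card V) < 2 * \<alpha> * real n}"

lemma finite_small_vertex_sets: "finite (small_vertex_sets n \<alpha>)"
  unfolding small_vertex_sets_def
  by (rule finite_subset[of _ "Pow (Knn_vertices n)"]) (auto simp: finite_Knn_vertices)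

lemma spread_prob_not_sparse_le:
  assumes "spread q n \<mu>"
  shows "measure_pmf.prob \<mu> {H. \<not> sparse n \<alpha> p H}
    \<le> (\<Sum>V\<in>small_vertex_sets n \<alpha>.
          real (card (induced_edges (Knn_edges n) V) choose least_nat_gt (p * real n * real (card V)))
          * q ^ least_nat_gt (p * real n * real (card V)))"
proof -
  define k where "k V = least_nat_gt (p * real n * real (card V))" for V :: "(nat + nat) set"
  define bad where "bad V = {H. k V \<le> card (H \<inter> induced_edges (Knn_edges n) V)}" for V
  have "{H. \<not> sparse n \<alpha> p H} \<inter> set_pmf \<mu> \<subseteq> (\<Union>V\<in>small_vertex_sets n \<alpha>. bad V)"
  proof
    fix H assume H: "H \<in> {H. \<not> sparse n \<alpha> p H} \<inter> set_pmf \<mu>"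
    then obtain V where V: "V \<in> small_vertex_sets n \<alpha>"
      and dense: "p * real n * real (card V) < real (card (induced_edges H V))"
      by (auto simp: sparse_def small_vertex_sets_def not_le)
    have "H \<subseteq> Knn_edges n"
      using H assms by (auto simp: spread_def)
    hence "H \<in> bad V"
      using dense by (simp add: bad_def k_def induced_edges_of_subgraph less_iff_least_nat_gt_le)
    thus "H \<in> (\<Union>V\<in>small_vertex_sets n \<alpha>. bad V)"
      using V by blast
  qed
  hence "measure_pmf.prob \<mu> {H. \<not> sparse n \<alpha> p H} \<le> measure_pmf.prob \<mu> (\<Union>V\<in>small_vertex_sets n \<alpha>. bad V)"
    by (subst measure_Int_set_pmf[symmetric]) (intro measure_pmf.finite_measure_mono, auto)
  also have "\<dots> \<le> (\<Sum>V\<in>small_vertex_sets n \<alpha>. measure_pmf.prob \<mu> (bad V))"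
    by (intro measure_pmf.finite_measure_subadditive_finite finite_small_vertex_sets) auto
  also have "\<dots> \<le> (\<Sum>V\<in>small_vertex_sets n \<alpha>.
      real (card (induced_edges (Knn_edges n) V) choose k V) * q ^ k V)"
    unfolding bad_def
    by (intro sum_mono spread_prob_card_inter_ge[OF assms] induced_edges_Knn_subset)
  finally show ?thesis
    by (simp add: k_def)
qed

lemma sum_dense_set_bound_le:
  assumes n: "n > 0" and "\<alpha> \<le> 1/4"
  shows "(\<Sum>V\<in>small_vertex_sets n \<alpha>. dense_set_bound n (card V)) \<le> 1 / real n ^ 14"
proof -
  let ?Vs = "small_vertex_sets n \<alpha>"
  have "(\<Sum>V\<in>?Vs. dense_set_bound n (card V))
      = (\<Sum>v\<in>card ` ?Vs. real (card {V \<in> ?Vs. card V = v}) * dense_set_bound n v)"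
    by (subst sum.image_gen[OF finite_small_vertex_sets, where g = card]) simp
  also have "\<dots> \<le> (\<Sum>v\<in>card ` ?Vs. 1 / (real n ^ 14 * 2 ^ Suc v))"
  proof (intro sum_mono)
    fix v assume "v \<in> card ` ?Vs"
    then obtain V where V: "V \<subseteq> Knn_vertices n" "real (card V) < 2 * \<alpha> * real n" "card V = v"
      by (auto simp: small_vertex_sets_def)
    have "2 * \<alpha> * real n \<le> 1 / 2 * real n"
      using assms by (intro mult_right_mono) auto
    hence "2 * v \<le> n"
      using V by linarith
    have "card {V \<in> ?Vs. card V = v} \<le> card {V. V \<subseteq> Knn_vertices n \<and> card V = v}"
      by (intro card_mono) (auto simp: small_vertex_sets_def finite_Knn_vertices)
    also have "\<dots> = 2 * n choose v"
      using n_subsets[OF finite_Knn_vertices] by (simp add: card_Knn_vertices)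
    finally have "real (card {V \<in> ?Vs. card V = v}) * dense_set_bound n v
        \<le> real (2 * n choose v) * dense_set_bound n v"
      by (intro mult_right_mono dense_set_bound_nonneg) simp
    also have "\<dots> \<le> 1 / (real n ^ 14 * 2 ^ Suc v)"
      using n \<open>2 * v \<le> n\<close> by (rule binomial_mult_dense_set_bound_le)
    finally show "real (card {V \<in> ?Vs. card V = v}) * dense_set_bound n v \<le> 1 / (real n ^ 14 * 2 ^ Suc v)" .
  qed
  also have "\<dots> \<le> (\<Sum>v\<le>2 * n. 1 / (real n ^ 14 * 2 ^ Suc v))"
  proof (intro sum_mono2)
    show "card ` ?Vs \<subseteq> {..2 * n}"
      using card_mono[OF finite_Knn_vertices] by (auto simp: small_vertex_sets_def card_Knn_vertices)
  qed auto
  also have "\<dots> = (\<Sum>v\<le>2 * n. 1 / 2 ^ Suc v) / real n ^ 14"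
    by (simp add: sum_divide_distrib mult.commute)
  also have "\<dots> \<le> 1 / real n ^ 14"
    by (intro divide_right_mono sum_inverse_two_pow_Suc_le_one) auto
  finally show ?thesis .
qed

lemma spread_prob_not_sparse_le_inverse_pow:
  fixes C \<alpha> \<gamma> r :: real
  assumes "C > 0" "\<gamma> > 0" "\<alpha> < 1/4" "20 * \<alpha> * C ^ 5 \<le> \<gamma> ^ 5" "5 \<le> \<gamma> * r" "n > 0"
    and spread: "spread (C * r / real n) n \<mu>"
  shows "measure_pmf.prob \<mu> {H. \<not> sparse n \<alpha> (\<gamma> * r / real n) H} \<le> 1 / real n ^ 14"
proof -
  let ?k = "\<lambda>V. least_nat_gt (\<gamma> * r / real n * real n * real (card V))"
  have "measure_pmf.prob \<mu> {H. \<not> sparse n \<alpha> (\<gamma> * r / real n) H}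
      \<le> (\<Sum>V\<in>small_vertex_sets n \<alpha>.
            real (card (induced_edges (Knn_edges n) V) choose ?k V) * (C * r / real n) ^ ?k V)"
    by (rule spread_prob_not_sparse_le[OF spread])
  also have "\<dots> \<le> (\<Sum>V\<in>small_vertex_sets n \<alpha>. dense_set_bound n (card V))"
  proof (intro sum_mono)
    fix V assume "V \<in> small_vertex_sets n \<alpha>"
    hence V: "V \<subseteq> Knn_vertices n" "real (card V) < 2 * \<alpha> * real n"
      by (auto simp: small_vertex_sets_def)
    have "\<gamma> * r * real (card V) < real (?k V)"
      using least_nat_gt_gt assms by simp
    thus "real (card (induced_edges (Knn_edges n) V) choose ?k V) * (C * r / real n) ^ ?k V
        \<le> dense_set_bound n (card V)"
      using V four_mult_card_induced_edges_Knn_le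
      by (intro binomial_mult_pow_le_dense_set_bound[OF assms(1-6)]) auto
  qed
  also have "\<dots> \<le> 1 / real n ^ 14"
    using assms by (intro sum_dense_set_bound_le) auto
  finally show ?thesis .
qed

theorem lemma2p6:
  fixes C \<alpha> \<gamma> r :: real and n :: nat and \<mu> :: "(nat \<times> nat) set pmf"
  assumes "C > 1"
    and "0 < \<alpha>" and "\<alpha> < 1/4"
    and "\<gamma> > C * (20 * \<alpha>) powr (1/5)"
    and "r > 5 / \<gamma>"
    and "spread (C * r / real n) n \<mu>"
  shows "measure_pmf.prob \<mu> {H. sparse n \<alpha> (\<gamma> * r / real n) H} \<ge> 1 - 1 / real n ^ 14"
proof (cases "n = 0")
  case True
  hence "sparse n \<alpha> (\<gamma> * r / real n) H" for H
    by (simp add: sparse_def Knn_vertices_def)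
  thus ?thesis
    using True by simp
next
  case False
  have root: "C * (20 * \<alpha>) powr (1/5) > 0"
    using assms by simp
  hence \<gamma>: "\<gamma> > 0"
    using assms by linarith
  have "((20 * \<alpha>) powr (1/5)) ^ 5 = 20 * \<alpha>"
    using assms by (simp add: powr_realpow[symmetric] powr_powr)
  hence "(C * (20 * \<alpha>) powr (1/5)) ^ 5 = 20 * \<alpha> * C ^ 5"
    by (simp add: power_mult_distrib)
  moreover have "(C * (20 * \<alpha>) powr (1/5)) ^ 5 \<le> \<gamma> ^ 5"
    using assms root by (intro power_mono) auto
  moreover have "5 \<le> \<gamma> * r"
    using assms \<gamma> by (simp add: divide_less_eq mult.commute)
  ultimately have "measure_pmf.prob \<mu> {H. \<not> sparse n \<alpha> (\<gamma> * r / real n) H} \<le> 1 / real n ^ 14"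
    using assms \<gamma> False by (intro spread_prob_not_sparse_le_inverse_pow) auto
  moreover have "measure_pmf.prob \<mu> {H. sparse n \<alpha> (\<gamma> * r / real n) H}
      = 1 - measure_pmf.prob \<mu> {H. \<not> sparse n \<alpha> (\<gamma> * r / real n) H}"
    using measure_pmf.prob_compl[of "{H. \<not> sparse n \<alpha> (\<gamma> * r / real n) H}" \<mu>]
    by (simp add: Compl_eq_Diff_UNIV[symmetric] Collect_neg_eq[symmetric])
  ultimately show ?thesis
    by simp
qed

end
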